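(* Let $T$ be a tree with exactly four pendant vertices $u_1,u_2,u_3,u_4$ and exactly two major vertices $m_1\ne m_2$, such that $T$ is the union of the paths $P_{u_1,m_1}$, $P_{u_2,m_1}$, $P_{m_1,m_2}$, $P_{u_3,m_2}$, $P_{u_4,m_2}$, where $P_{u_1,m_1}$ and $P_{u_2,m_1}$ are glued to $P_{m_1,m_2}$ at $m_1$, and $P_{u_3,m_2}$ and $P_{u_4,m_2}$ are glued at $m_2$ (these five paths being otherwise disjoint). If $m(T,1)\ge 2$, then $d(u_1,m_1)\equiv d(u_2,m_1)\equiv 1\pmod 3$ or $d(u_3,m_2)\equiv d(u_4,m_2)\equiv 1\pmod 3$.
   Context: $m(T,\lambda)$ denotes the multiplicity of $\lambda$ as an eigenvalue of the Laplacian matrix $L(T)=D(T)-A(T)$. A pendant vertex has degree $1$; a major vertex has degree at least $3$. $P_{r,s}$ is the path from $r$ to $s$; $d$ denotes distance. *)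

theory Defs
  imports "Jordan_Normal_Form.Char_Poly"
begin

definition simple_graph :: "nat \<Rightarrow> (nat \<Rightarrow> nat \<Rightarrow> bool) \<Rightarrow> bool" where
  "simple_graph n E \<longleftrightarrow> (\<forall>i j. E i j \<longrightarrow> i < n \<and> j < n) \<and> (\<forall>i j. E i j \<longrightarrow> E j i)
      \<and> (\<forall>i. \<not> E i i)"

definition is_walk :: "(nat \<Rightarrow> nat \<Rightarrow> bool) \<Rightarrow> nat list \<Rightarrow> bool" where
  "is_walk E xs \<longleftrightarrow> xs \<noteq> [] \<and> (\<forall>k. Suc k < length xs \<longrightarrow> E (xs ! k) (xs ! Suc k))"

definition is_path :: "(nat \<Rightarrow> nat \<Rightarrow> bool) \<Rightarrow> nat list \<Rightarrow> bool" where
  "is_path E xs \<longleftrightarrow> is_walk E xs \<and> distinct xs"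

definition is_cycle :: "(nat \<Rightarrow> nat \<Rightarrow> bool) \<Rightarrow> nat list \<Rightarrow> bool" where
  "is_cycle E xs \<longleftrightarrow> is_path E xs \<and> length xs \<ge> 3 \<and> E (last xs) (hd xs)"

definition connected_graph :: "nat \<Rightarrow> (nat \<Rightarrow> nat \<Rightarrow> bool) \<Rightarrow> bool" where
  "connected_graph n E \<longleftrightarrow> (\<forall>x<n. \<forall>y<n. \<exists>xs. is_walk E xs \<and> hd xs = x \<and> last xs = y)"

definition is_tree :: "nat \<Rightarrow> (nat \<Rightarrow> nat \<Rightarrow> bool) \<Rightarrow> bool" where
  "is_tree n E \<longleftrightarrow> n \<ge> 1 \<and> simple_graph n E \<and> connected_graph n E \<and> (\<nexists>xs. is_cycle E xs)"

definition degree :: "nat \<Rightarrow> (nat \<Rightarrow> nat \<Rightarrow> bool) \<Rightarrow> nat \<Rightarrow> nat" where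
  "degree n E i = card {j. j < n \<and> E i j}"

definition pendant :: "nat \<Rightarrow> (nat \<Rightarrow> nat \<Rightarrow> bool) \<Rightarrow> nat \<Rightarrow> bool" where
  "pendant n E v \<longleftrightarrow> v < n \<and> degree n E v = 1"

definition major :: "nat \<Rightarrow> (nat \<Rightarrow> nat \<Rightarrow> bool) \<Rightarrow> nat \<Rightarrow> bool" where
  "major n E v \<longleftrightarrow> v < n \<and> degree n E v \<ge> 3"

definition dist_graph :: "(nat \<Rightarrow> nat \<Rightarrow> bool) \<Rightarrow> nat \<Rightarrow> nat \<Rightarrow> nat" where
  "dist_graph E x y = (LEAST k. \<exists>xs. is_walk E xs \<and> hd xs = x \<and> last xs = y \<and> length xs = Suc k)"

text \<open>Vertex set of the path P_{r,s} (in a tree the path is unique).\<close>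
definition path_verts :: "(nat \<Rightarrow> nat \<Rightarrow> bool) \<Rightarrow> nat \<Rightarrow> nat \<Rightarrow> nat set" where
  "path_verts E r s = {z. \<exists>xs. is_path E xs \<and> hd xs = r \<and> last xs = s \<and> z \<in> set xs}"

definition laplacian :: "nat \<Rightarrow> (nat \<Rightarrow> nat \<Rightarrow> bool) \<Rightarrow> real mat" where
  "laplacian n E = mat n n (\<lambda>(i, j). if i = j then real (degree n E i) else if E i j then -1 else 0)"

text \<open>m(T,\<lambda>): multiplicity of \<lambda> as an eigenvalue of L(T) (root multiplicity in
the characteristic polynomial; equals geometric multiplicity as L is symmetric).\<close>
definition lap_mult :: "nat \<Rightarrow> (nat \<Rightarrow> nat \<Rightarrow> bool) \<Rightarrow> real \<Rightarrow> nat" where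
  "lap_mult n E lam = order lam (char_poly (laplacian n E))"

end

theory Submission
  imports Defs "Jordan_Normal_Form.Jordan_Normal_Form_Existence"
    "Jordan_Normal_Form.Jordan_Normal_Form_Uniqueness"
begin

text \<open>If \<open>L x = x\<close>, the equation at a pendant vertex makes \<open>x\<close> vanish at its neighbour, and
  along a path of degree-2 vertices it becomes \<open>x(j+1) = x(j) - x(j-1)\<close>. So on an arm, at
  distance \<open>j\<close> from its pendant vertex \<open>u\<close>, \<open>x = x(u) c(j)\<close> with \<open>c = 1, 0, -1, -1, 0, 1, ...\<close>,
  which vanishes exactly when \<open>j mod 3 = 1\<close>. Assume \<open>d(u2,m1) mod 3 \<noteq> 1\<close> and that not both
  \<open>d(u3,m2), d(u4,m2)\<close> are \<open>1 mod 3\<close>. If \<open>x(u1) = 0\<close>, then \<open>x\<close> vanishes on the arm of \<open>u1\<close>,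
  hence at \<open>m1\<close>, hence on the arm of \<open>u2\<close>; the equation at \<open>m1\<close> then kills the next vertex
  of the path from \<open>m1\<close> to \<open>m2\<close> and with it that whole path, and the equation at \<open>m2\<close> together
  with the arms of \<open>u3\<close> and \<open>u4\<close> forces \<open>x = 0\<close>. Thus \<open>x \<mapsto> x(u1)\<close> is injective on the
  eigenspace of \<open>1\<close>, which therefore has dimension at most \<open>1\<close>; since \<open>L\<close> is symmetric its
  algebraic and geometric multiplicities agree, so \<open>m(T,1) \<le> 1\<close>. The roles of \<open>u1\<close> and \<open>u2\<close>
  are symmetric.\<close>

section \<open>Multiplicity of an eigenvalue of a real symmetric matrix\<close>

lemma min_sum_list_le_sum_list_min: "min k (sum_list xs) \<le> sum_list (map (min (k::nat)) xs)"
  by (induct xs) auto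

lemma min_order_char_poly_le_dim_gen_eigenspace:
  fixes A :: "complex mat"
  assumes A: "A \<in> carrier_mat n n"
  shows "min k (Polynomial.order a (char_poly A)) \<le> dim_gen_eigenspace A a k"
proof -
  obtain as where "char_poly A = (\<Prod>a\<leftarrow>as. [:- a, 1:])"
    using char_poly_factorized[OF A] by auto
  from jordan_nf_exists[OF A this] obtain n_as where jnf: "jordan_nf A n_as" ..
  show ?thesis
    unfolding jordan_nf_order[OF jnf] dim_gen_eigenspace[OF jnf]
    using min_sum_list_le_sum_list_min[of k "map fst (filter (\<lambda>na. snd na = a) n_as)"]
    by (simp add: case_prod_beta' o_def cong: filter_cong)
qed

lemma order_map_poly_of_real:
  "Polynomial.order (of_real a :: complex) (map_poly of_real p) = Polynomial.order a p"
proof -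
  interpret h: map_poly_inj_idom_divide_hom complex_of_real ..
  show ?thesis using h.order_hom[of a p] by simp
qed

text \<open>For real symmetric \<open>M\<close>, \<open>\<parallel>M v\<parallel>\<^sup>2 = v \<bullet> M (M v)\<close>, so \<open>M\<^sup>2 v = 0\<close> forces \<open>M v = 0\<close>.\<close>
lemma real_symmetric_mat_kernel_square:
  fixes M :: "complex mat"
  assumes M: "M \<in> carrier_mat n n"
    and sym: "\<And>i j. i < n \<Longrightarrow> j < n \<Longrightarrow> M $$ (i, j) = M $$ (j, i)"
    and real: "\<And>i j. i < n \<Longrightarrow> j < n \<Longrightarrow> cnj (M $$ (i, j)) = M $$ (i, j)"
  shows "mat_kernel (M * M) = mat_kernel M"
proof
  show "mat_kernel M \<subseteq> mat_kernel (M * M)"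
    using mat_kernel_mult_subset[OF M M] .
  show "mat_kernel (M * M) \<subseteq> mat_kernel M"
  proof
    fix v assume "v \<in> mat_kernel (M * M)"
    hence v: "v \<in> carrier_vec n" and z: "M *\<^sub>v (M *\<^sub>v v) = 0\<^sub>v n"
      using M by (auto simp: mat_kernel_def assoc_mult_mat_vec)
    define w where "w = M *\<^sub>v v"
    have w: "w \<in> carrier_vec n" unfolding w_def using M v by auto
    have tr: "transpose_mat M = M"
      by (rule eq_matI) (use M sym in auto)
    have cw: "M *\<^sub>v conjugate w = conjugate (M *\<^sub>v w)"
    proof (rule eq_vecI)
      fix j assume "j < dim_vec (conjugate (M *\<^sub>v w))"
      hence j: "j < n" using M by auto
      have "(M *\<^sub>v conjugate w) $ j = (\<Sum>i = 0..<n. M $$ (j, i) * cnj (w $ i))"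
        using M w j by (simp add: scalar_prod_def)
      also have "\<dots> = cnj (\<Sum>i = 0..<n. M $$ (j, i) * w $ i)"
        by (simp add: cnj_sum real j)
      also have "\<dots> = conjugate (M *\<^sub>v w) $ j"
        using M w j by (simp add: scalar_prod_def)
      finally show "(M *\<^sub>v conjugate w) $ j = conjugate (M *\<^sub>v w) $ j" .
    qed (use M w in auto)
    have "w \<bullet>c w = (transpose_mat M *\<^sub>v v) \<bullet> conjugate w" unfolding w_def tr ..
    also have "\<dots> = v \<bullet> (M *\<^sub>v conjugate w)"
      by (rule transpose_vec_mult_scalar[OF M]) (use w v in auto)
    also have "\<dots> = 0" unfolding cw unfolding w_def z using v by simp
    finally have "M *\<^sub>v v = 0\<^sub>v n" using w unfolding w_def by simp
    thus "v \<in> mat_kernel M" using M v by (auto intro: mat_kernelI)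
  qed
qed

lemma kernel_dim_le_1_if_coordinate_injective:
  fixes M :: "'a::field mat"
  assumes M: "M \<in> carrier_mat nr nc" and i: "i < nc"
    and inj: "\<And>v. v \<in> mat_kernel M \<Longrightarrow> v $ i = 0 \<Longrightarrow> v = 0\<^sub>v nc"
  shows "kernel_dim M \<le> 1"
proof -
  interpret K: kernel nr nc M by unfold_locales (rule M)
  obtain u where u: "u \<in> mat_kernel M" and multiple: "\<And>w. w \<in> mat_kernel M \<Longrightarrow> \<exists>c. w = c \<cdot>\<^sub>v u"
  proof (cases "\<exists>u \<in> mat_kernel M. u $ i \<noteq> 0")
    case True
    then obtain u where u: "u \<in> mat_kernel M" "u $ i \<noteq> 0" by auto
    show ?thesis
    proof (rule that[OF u(1)])
      fix w assume w: "w \<in> mat_kernel M"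
      define c where "c = w $ i / u $ i"
      have "w + (- c) \<cdot>\<^sub>v u \<in> mat_kernel M"
        using u w M by (auto simp: mat_kernel_def mult_add_distrib_mat_vec[OF M] mult_mat_vec[OF M])
      moreover have "(w + (- c) \<cdot>\<^sub>v u) $ i = 0"
        using u w i M unfolding c_def by (auto simp: mat_kernel_def)
      ultimately have "w + (- c) \<cdot>\<^sub>v u = 0\<^sub>v nc" by (rule inj)
      hence "w = c \<cdot>\<^sub>v u"
      proof (intro eq_vecI)
        fix j assume "w + - c \<cdot>\<^sub>v u = 0\<^sub>v nc" and "j < dim_vec (c \<cdot>\<^sub>v u)"
        thus "w $ j = (c \<cdot>\<^sub>v u) $ j" using u w M
          by (auto simp: mat_kernel_def dest!: arg_cong[of _ _ "\<lambda>x. x $ j"])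
      qed (use u w M in \<open>auto simp: mat_kernel_def\<close>)
      thus "\<exists>c. w = c \<cdot>\<^sub>v u" by blast
    qed
  next
    case False
    show ?thesis
    proof (rule that[of "0\<^sub>v nc"])
      show "0\<^sub>v nc \<in> mat_kernel M" using M by (auto intro: mat_kernelI)
      fix w assume "w \<in> mat_kernel M"
      with False inj have "w = 0\<^sub>v nc" by auto
      thus "\<exists>c. w = c \<cdot>\<^sub>v 0\<^sub>v nc" by (intro exI[of _ 1]) auto
    qed
  qed
  have span: "submodule class_ring (K.Ker.span {u}) K.VK"
    by (rule K.Ker.span_is_submodule) (use u in auto)
  have "K.Ker.span {u} = mat_kernel M"
  proof
    show "K.Ker.span {u} \<subseteq> mat_kernel M" using span unfolding submodule_def by auto
    show "mat_kernel M \<subseteq> K.Ker.span {u}"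
    proof
      fix w assume "w \<in> mat_kernel M"
      then obtain c where c: "w = c \<cdot>\<^sub>v u" using multiple by blast
      have "u \<in> K.Ker.span {u}" using K.Ker.in_own_span[of "{u}"] u by auto
      from submodule.smult_closed[OF span _ this, of c] show "w \<in> K.Ker.span {u}"
        unfolding c by (simp add: class_ring_simps)
    qed
  qed
  from K.Ker.dim_le1I[OF this u] show ?thesis by simp
qed

lemma real_symmetric_order_char_poly_le_1:
  fixes L :: "real mat"
  assumes L: "L \<in> carrier_mat n n"
    and sym: "\<And>i j. i < n \<Longrightarrow> j < n \<Longrightarrow> L $$ (i, j) = L $$ (j, i)"
    and i: "i < n"
    and inj: "\<And>v. v \<in> mat_kernel (char_matrix (map_mat complex_of_real L) (of_real a))
                \<Longrightarrow> v $ i = 0 \<Longrightarrow> v = 0\<^sub>v n"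
  shows "Polynomial.order a (char_poly L) \<le> 1"
proof -
  define Lc where "Lc = map_mat complex_of_real L"
  define M where "M = char_matrix Lc (of_real a)"
  have Lc: "Lc \<in> carrier_mat n n" unfolding Lc_def using L by simp
  have M: "M \<in> carrier_mat n n" unfolding M_def using Lc by simp
  have "mat_kernel (M ^\<^sub>m 2) = mat_kernel (M * M)"
    using M by (simp add: numeral_2_eq_2)
  also have "\<dots> = mat_kernel M"
    by (rule real_symmetric_mat_kernel_square[OF M])
      (use L sym in \<open>auto simp: M_def Lc_def char_matrix_def\<close>)
  finally have ker: "kernel_dim (M ^\<^sub>m 2) = kernel_dim M"
    using M unfolding kernel_dim_def by simp
  have "min 2 (Polynomial.order a (char_poly L)) = min 2 (Polynomial.order (of_real a) (char_poly Lc))"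
    unfolding Lc_def of_real_hom.char_poly_hom[OF L] order_map_poly_of_real ..
  also have "\<dots> \<le> kernel_dim (M ^\<^sub>m 2)"
    using min_order_char_poly_le_dim_gen_eigenspace[OF Lc, of 2 "of_real a"]
    unfolding dim_gen_eigenspace_def M_def .
  also have "\<dots> = kernel_dim M" by (rule ker)
  also have "\<dots> \<le> 1"
    by (rule kernel_dim_le_1_if_coordinate_injective[OF M i]) (use inj in \<open>auto simp: M_def Lc_def\<close>)
  finally show ?thesis by simp
qed

section \<open>Paths in forests\<close>

lemma walk_edge: "is_walk E xs \<Longrightarrow> Suc k < length xs \<Longrightarrow> E (xs ! k) (xs ! Suc k)"
  unfolding is_walk_def by blast

lemma walk_append:
  assumes "is_walk E xs" "is_walk E ys" "E (last xs) (hd ys)"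
  shows "is_walk E (xs @ ys)"
  unfolding is_walk_def
proof (intro conjI allI impI)
  show "xs @ ys \<noteq> []" using assms unfolding is_walk_def by simp
  fix k assume k: "Suc k < length (xs @ ys)"
  consider "Suc k < length xs" | "Suc k = length xs" | "Suc k > length xs" by linarith
  thus "E ((xs @ ys) ! k) ((xs @ ys) ! Suc k)"
  proof cases
    case 1 thus ?thesis using assms by (simp add: nth_append is_walk_def)
  next
    case 2
    hence "xs ! k = last xs" using last_conv_nth[of xs] assms(1) unfolding is_walk_def
      by (metis diff_Suc_1)
    moreover have "ys ! 0 = hd ys" using assms(2) by (simp add: is_walk_def hd_conv_nth)
    ultimately show ?thesis using 2 assms by (simp add: nth_append)
  next
    case 3
    then obtain m where m: "k = length xs + m" by (metis less_Suc_eq_le le_Suc_ex)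
    have "E (ys ! m) (ys ! Suc m)" using assms(2) k unfolding is_walk_def m by simp
    thus ?thesis using m by (simp add: nth_append)
  qed
qed

lemma walk_rev:
  assumes sym: "symp E" and w: "is_walk E xs"
  shows "is_walk E (rev xs)"
  unfolding is_walk_def
proof (intro conjI allI impI)
  show "rev xs \<noteq> []" using w unfolding is_walk_def by simp
  fix k assume k: "Suc k < length (rev xs)"
  have "E (xs ! (length xs - Suc (Suc k))) (xs ! Suc (length xs - Suc (Suc k)))"
    using w k unfolding is_walk_def by simp
  moreover have "Suc (length xs - Suc (Suc k)) = length xs - Suc k" using k by simp
  ultimately have "E (rev xs ! Suc k) (rev xs ! k)" using k by (simp add: rev_nth)
  thus "E (rev xs ! k) (rev xs ! Suc k)" by (rule sympD[OF sym])
qed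

lemma walk_take: "is_walk E xs \<Longrightarrow> 0 < k \<Longrightarrow> is_walk E (take k xs)"
  unfolding is_walk_def by auto

lemma walk_drop: "is_walk E xs \<Longrightarrow> k < length xs \<Longrightarrow> is_walk E (drop k xs)"
  unfolding is_walk_def by auto

lemma path_rev: "symp E \<Longrightarrow> is_path E P \<Longrightarrow> is_path E (rev P)"
  unfolding is_path_def using walk_rev by auto

lemma path_take: "is_path E P \<Longrightarrow> 0 < k \<Longrightarrow> is_path E (take k P)"
  unfolding is_path_def using walk_take by auto

lemma path_drop: "is_path E P \<Longrightarrow> k < length P \<Longrightarrow> is_path E (drop k P)"
  unfolding is_path_def using walk_drop by auto

lemma path_length_ge_2: "is_path E P \<Longrightarrow> hd P \<noteq> last P \<Longrightarrow> 2 \<le> length P"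
  by (cases P; cases "tl P") (auto simp: is_path_def is_walk_def)

lemma path_interior_ne_ends:
  assumes P: "is_path E P" and j: "0 < j" "Suc j < length P"
  shows "P ! j \<noteq> hd P" "P ! j \<noteq> last P"
proof -
  have "distinct P" "P \<noteq> []" using P j by (auto simp: is_path_def)
  thus "P ! j \<noteq> hd P" "P ! j \<noteq> last P"
    using j nth_eq_iff_index_eq[of P j 0] nth_eq_iff_index_eq[of P j "length P - 1"]
    by (auto simp: hd_conv_nth last_conv_nth)
qed

lemma is_cycle_append_rev:
  assumes sym: "symp E"
    and A: "is_path E A" and B: "is_path E B" and disj: "set A \<inter> set B = {}"
    and AB: "E (last A) (last B)" and BA: "E (hd B) (hd A)" and len: "3 \<le> length A + length B"
  shows "is_cycle E (A @ rev B)"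
  unfolding is_cycle_def is_path_def
proof (intro conjI)
  have ne: "A \<noteq> []" "B \<noteq> []" using A B by (auto simp: is_path_def is_walk_def)
  show "is_walk E (A @ rev B)"
    using walk_append[OF _ walk_rev[OF sym]] A B AB ne by (simp add: is_path_def hd_rev)
  show "distinct (A @ rev B)" using A B disj by (simp add: is_path_def)
  show "3 \<le> length (A @ rev B)" using len by simp
  show "E (last (A @ rev B)) (hd (A @ rev B))" using BA ne by (simp add: last_rev)
qed

text \<open>Two paths with common ends in a forest that already differ in their second vertex
  would close a cycle: walk along the first path until the second one returns to it.\<close>
lemma forest_paths_second_vertex:
  assumes sym: "symp E" and acyclic: "\<nexists>xs. is_cycle E xs"
    and P: "is_path E P" and Q: "is_path E Q" and len: "2 \<le> length P" "2 \<le> length Q"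
    and hd: "P ! 0 = Q ! 0" and last: "last P = last Q"
  shows "P ! 1 = Q ! 1"
proof (rule ccontr)
  assume ne: "P ! 1 \<noteq> Q ! 1"
  have dP: "distinct P" and dQ: "distinct Q" using P Q unfolding is_path_def by auto
  let ?back = "\<lambda>j. 1 \<le> j \<and> j < length Q \<and> Q ! j \<in> set P"
  have "P \<noteq> []" "Q \<noteq> []" using len by auto
  hence "?back (length Q - 1)"
    using len last last_conv_nth[of Q] last_in_set[of P] by auto
  then obtain j where j: "?back j" and before: "\<And>l. l < j \<Longrightarrow> \<not> ?back l"
    using exists_least_iff[of ?back] by blast
  obtain i where i: "i < length P" and Pi: "P ! i = Q ! j"
    using j by (metis in_set_conv_nth)
  have "i \<noteq> 0"
  proof
    assume "i = 0"
    hence "Q ! j = Q ! 0" using Pi hd by simp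
    thus False using j nth_eq_iff_index_eq[OF dQ, of j 0] \<open>Q \<noteq> []\<close> by simp
  qed
  define A where "A = take i P"
  define B where "B = take j (tl Q)"
  have B_nth: "B ! l = Q ! Suc l" if "l < j" for l
    using that j unfolding B_def by (auto simp: nth_tl)
  have lenB: "length B = j" using j unfolding B_def by auto
  have "x \<notin> set B" if "x \<in> set A" for x
  proof
    assume "x \<in> set B"
    then obtain l where l: "l < j" "x = Q ! Suc l" using lenB B_nth by (metis in_set_conv_nth)
    show False
    proof (cases "Suc l = j")
      case True
      from \<open>x \<in> set A\<close> obtain k where "k < i" "P ! k = x"
        unfolding A_def using i by (auto simp: in_set_conv_nth)
      thus False using l True Pi i nth_eq_iff_index_eq[OF dP, of k i] by simp
    next
      case False
      thus False using before[of "Suc l"] l j \<open>x \<in> set A\<close> unfolding A_def by (auto dest: in_set_takeD)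
    qed
  qed
  hence "set A \<inter> set B = {}" by blast
  moreover have "is_path E A" unfolding A_def by (rule path_take[OF P]) (use \<open>i \<noteq> 0\<close> in simp)
  moreover have "is_path E B" unfolding B_def drop_Suc[symmetric, of 0, simplified]
    by (rule path_take[OF path_drop[OF Q]]) (use len j in auto)
  moreover have "E (last A) (last B)"
  proof -
    have "last A = P ! (i - 1)" using \<open>i \<noteq> 0\<close> i unfolding A_def by (subst last_conv_nth) auto
    moreover have "last B = P ! i"
      using B_nth[of "j - 1"] lenB j Pi \<open>i \<noteq> 0\<close> by (subst last_conv_nth) auto
    ultimately show ?thesis
      using walk_edge[of E P "i - 1"] P i \<open>i \<noteq> 0\<close> by (simp add: is_path_def)
  qed
  moreover have "E (hd B) (hd A)"
  proof -
    have "hd A = Q ! 0" using hd \<open>i \<noteq> 0\<close> \<open>P \<noteq> []\<close> unfolding A_def by (simp add: hd_conv_nth)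
    moreover have "hd B = Q ! 1" using B_nth[of 0] lenB j by (subst hd_conv_nth) auto
    ultimately show ?thesis using walk_edge[of E Q 0] Q len sympD[OF sym] by (auto simp: is_path_def)
  qed
  moreover have "3 \<le> length A + length B"
  proof (cases "i = 1")
    case True
    hence "j \<noteq> 1" using ne Pi by auto
    thus ?thesis using True j lenB i unfolding A_def by simp
  next
    case False
    thus ?thesis using \<open>i \<noteq> 0\<close> i j lenB unfolding A_def by simp
  qed
  ultimately have "is_cycle E (A @ rev B)" using is_cycle_append_rev[OF sym] by blast
  with acyclic show False by blast
qed

lemma forest_path_unique:
  assumes sym: "symp E" and acyclic: "\<nexists>xs. is_cycle E xs"
  shows "is_path E P \<Longrightarrow> is_path E Q \<Longrightarrow> hd P = hd Q \<Longrightarrow> last P = last Q \<Longrightarrow> P = Q"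
proof (induct P arbitrary: Q)
  case Nil thus ?case by (simp add: is_path_def is_walk_def)
next
  case (Cons a P')
  obtain Q' where Q: "Q = a # Q'" using Cons.prems by (cases Q) (auto simp: is_path_def is_walk_def)
  have "a \<notin> set P'" and "a \<notin> set Q'" using Cons.prems Q by (auto simp: is_path_def)
  have last_eq: "last (a # P') = last (a # Q')" using Cons.prems(4) Q by simp
  have "P' = [] \<longleftrightarrow> Q' = []"
  proof
    assume "P' = []"
    show "Q' = []"
    proof (rule ccontr)
      assume "Q' \<noteq> []"
      hence "last Q' = a" using last_eq \<open>P' = []\<close> by simp
      thus False using last_in_set[OF \<open>Q' \<noteq> []\<close>] \<open>a \<notin> set Q'\<close> by simp
    qed
  next
    assume "Q' = []"
    show "P' = []"
    proof (rule ccontr)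
      assume "P' \<noteq> []"
      hence "last P' = a" using last_eq \<open>Q' = []\<close> by simp
      thus False using last_in_set[OF \<open>P' \<noteq> []\<close>] \<open>a \<notin> set P'\<close> by simp
    qed
  qed
  show ?case
  proof (cases "P' = []")
    case True
    thus ?thesis using Q \<open>P' = [] \<longleftrightarrow> Q' = []\<close> by simp
  next
    case False
    with \<open>P' = [] \<longleftrightarrow> Q' = []\<close> have "Q' \<noteq> []" by simp
    have "(a # P') ! 1 = Q ! 1"
    proof (rule forest_paths_second_vertex[OF sym acyclic Cons.prems(1,2)])
      show "2 \<le> length (a # P')" "2 \<le> length Q" using False \<open>Q' \<noteq> []\<close> Q
        by (auto simp: Suc_le_eq)
      show "(a # P') ! 0 = Q ! 0" using Q by simp
      show "last (a # P') = last Q" by fact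
    qed
    hence hd_eq: "hd P' = hd Q'" using False \<open>Q' \<noteq> []\<close> Q by (simp add: hd_conv_nth)
    have "is_path E P'" using path_drop[OF Cons.prems(1), of 1] False by simp
    moreover have "is_path E Q'" using path_drop[OF Cons.prems(2), of 1] \<open>Q' \<noteq> []\<close> Q by simp
    moreover note hd_eq
    moreover have "last P' = last Q'" using last_eq False \<open>Q' \<noteq> []\<close> by simp
    ultimately have "P' = Q'" by (rule Cons.hyps)
    thus ?thesis using Q by simp
  qed
qed

lemma walk_shortcut:
  assumes W: "is_walk E W" and "\<not> distinct W"
  obtains W' where "is_walk E W'" "hd W' = hd W" "last W' = last W" "length W' < length W"
proof -
  obtain i j where ij: "i < j" "j < length W" "W ! i = W ! j"
    using assms(2) by (metis distinct_conv_nth linorder_neqE_nat)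
  define W' where "W' = take i W @ drop j W"
  have hd_drop: "hd (drop j W) = W ! j" using ij by (simp add: hd_drop_conv_nth)
  have walk_drop_j: "is_walk E (drop j W)" by (rule walk_drop[OF W ij(2)])
  show ?thesis
  proof (rule that)
    show "is_walk E W'"
    proof (cases "i = 0")
      case True thus ?thesis unfolding W'_def using walk_drop_j by simp
    next
      case False
      have "E (W ! (i - 1)) (W ! i)" using walk_edge[OF W, of "i - 1"] False ij by simp
      hence "E (last (take i W)) (hd (drop j W))" using False ij hd_drop
        by (subst last_conv_nth) auto
      thus ?thesis unfolding W'_def
        by (rule walk_append[OF walk_take[OF W] walk_drop_j, rotated]) (use False in simp)
    qed
    show "hd W' = hd W"
    proof (cases "i = 0")
      case True thus ?thesis using ij hd_drop W unfolding W'_def by (simp add: hd_conv_nth is_walk_def)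
    next
      case False thus ?thesis using ij unfolding W'_def by (cases W) auto
    qed
    show "last W' = last W" unfolding W'_def using ij by simp
    show "length W' < length W" unfolding W'_def using ij by simp
  qed
qed

lemma dist_graph_path:
  assumes sym: "symp E" and acyclic: "\<nexists>xs. is_cycle E xs"
    and P: "is_path E P"
  shows "dist_graph E (hd P) (last P) = length P - 1"
proof -
  have P_ne: "P \<noteq> []" using P by (simp add: is_path_def is_walk_def)
  have shortest: "length P \<le> length W"
    if "is_walk E W" "hd W = hd P" "last W = last P" for W
    using that
  proof (induct "length W" arbitrary: W rule: less_induct)
    case less
    show ?case
    proof (cases "distinct W")
      case True
      hence "W = P" using forest_path_unique[OF sym acyclic _ P] less.prems
        by (simp add: is_path_def)
      thus ?thesis by simp
    next
      case False
      from walk_shortcut[OF \<open>is_walk E W\<close> False] obtain W' where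
        W': "is_walk E W'" "hd W' = hd W" "last W' = last W" "length W' < length W" .
      have "length P \<le> length W'" using less.hyps[OF W'(4) W'(1)] W'(2,3) less.prems by simp
      thus ?thesis using W'(4) by simp
    qed
  qed
  show ?thesis unfolding dist_graph_def
  proof (rule Least_equality)
    show "\<exists>xs. is_walk E xs \<and> hd xs = hd P \<and> last xs = last P \<and> length xs = Suc (length P - 1)"
      using P P_ne by (intro exI[of _ P]) (auto simp: is_path_def)
    fix k assume "\<exists>xs. is_walk E xs \<and> hd xs = hd P \<and> last xs = last P \<and> length xs = Suc k"
    then obtain W where W: "is_walk E W" "hd W = hd P" "last W = last P" "length W = Suc k" by blast
    thus "length P - 1 \<le> k" using shortest[OF W(1-3)] by simp
  qed
qed

lemma path_verts_eq_set:
  assumes sym: "symp E" and acyclic: "\<nexists>xs. is_cycle E xs"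
    and P: "is_path E P"
  shows "path_verts E (hd P) (last P) = set P"
proof -
  have "Q = P" if "is_path E Q" "hd Q = hd P" "last Q = last P" for Q
    using forest_path_unique[OF sym acyclic that(1) P] that(2,3) .
  thus ?thesis unfolding path_verts_def using P by auto
qed

section \<open>Eigenvectors of the Laplacian along bare paths\<close>

definition neighbours :: "nat \<Rightarrow> (nat \<Rightarrow> nat \<Rightarrow> bool) \<Rightarrow> nat \<Rightarrow> nat set" where
  "neighbours n E i = {j. j < n \<and> E i j}"

lemma degree_eq_card_neighbours: "degree n E i = card (neighbours n E i)"
  unfolding degree_def neighbours_def ..

lemma finite_neighbours [simp]: "finite (neighbours n E i)"
  unfolding neighbours_def by simp

abbreviation penult :: "'a list \<Rightarrow> 'a" where
  "penult P \<equiv> P ! (length P - 2)"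

definition bare_path :: "nat \<Rightarrow> (nat \<Rightarrow> nat \<Rightarrow> bool) \<Rightarrow> nat list \<Rightarrow> bool" where
  "bare_path n E P \<longleftrightarrow> is_path E P \<and> 2 \<le> length P \<and> set P \<subseteq> {0..<n} \<and>
     (\<forall>j. 0 < j \<longrightarrow> Suc j < length P \<longrightarrow> neighbours n E (P ! j) = {P ! (j - 1), P ! Suc j})"

definition arm :: "nat \<Rightarrow> (nat \<Rightarrow> nat \<Rightarrow> bool) \<Rightarrow> nat list \<Rightarrow> bool" where
  "arm n E P \<longleftrightarrow> bare_path n E P \<and> neighbours n E (P ! 0) = {P ! 1}"

definition fixed_by_laplacian :: "nat \<Rightarrow> (nat \<Rightarrow> nat \<Rightarrow> bool) \<Rightarrow> (nat \<Rightarrow> 'a::comm_ring_1) \<Rightarrow> bool" where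
  "fixed_by_laplacian n E x \<longleftrightarrow>
     (\<forall>i<n. (of_nat (card (neighbours n E i)) - 1) * x i = (\<Sum>j\<in>neighbours n E i. x j))"

text \<open>The values of an eigenvector along an arm, in units of its value at the pendant vertex:
  \<open>1, 0, -1, -1, 0, 1, \<dots>\<close>\<close>
fun arm_coeff :: "nat \<Rightarrow> int" where
  "arm_coeff 0 = 1"
| "arm_coeff (Suc 0) = 0"
| "arm_coeff (Suc (Suc j)) = arm_coeff (Suc j) - arm_coeff j"

lemma arm_coeff_add_3: "arm_coeff (j + 3) = - arm_coeff j"
  by (simp add: numeral_3_eq_3)

lemma arm_coeff_eq_0_iff: "arm_coeff j = 0 \<longleftrightarrow> j mod 3 = 1"
proof (induct j rule: less_induct)
  case (less j)
  show ?case
  proof (cases "j < 3")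
    case True
    then consider "j = 0" | "j = 1" | "j = 2" by linarith
    thus ?thesis by cases (simp_all add: numeral_2_eq_2)
  next
    case False
    then obtain k where k: "j = k + 3" by (metis add.commute le_Suc_ex not_less)
    thus ?thesis using less[of k] arm_coeff_add_3[of k] by simp
  qed
qed

lemma arm_coeff_consecutive: "arm_coeff j \<noteq> 0 \<or> arm_coeff (Suc j) \<noteq> 0"
  using arm_coeff_eq_0_iff[of j] arm_coeff_eq_0_iff[of "Suc j"] by (simp add: mod_Suc)

lemma bare_path_length: "bare_path n E P \<Longrightarrow> 2 \<le> length P"
  unfolding bare_path_def by simp

lemma arm_bare_path: "arm n E P \<Longrightarrow> bare_path n E P"
  unfolding arm_def by simp

lemma bare_path_nonempty: "bare_path n E P \<Longrightarrow> P \<noteq> []"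
  using bare_path_length[of n E P] by auto

lemma bare_path_distinct: "bare_path n E P \<Longrightarrow> distinct P"
  unfolding bare_path_def is_path_def by simp

lemma bare_path_hd: "bare_path n E P \<Longrightarrow> hd P = P ! 0"
  using bare_path_length[of n E P] by (cases P) auto

lemma bare_path_last: "bare_path n E P \<Longrightarrow> last P = P ! (length P - 1)"
  using bare_path_length[of n E P] by (subst last_conv_nth) auto

lemma bare_path_hd_ne_last:
  assumes P: "bare_path n E P" shows "hd P \<noteq> last P"
proof -
  have "2 \<le> length P" by (rule bare_path_length[OF P])
  hence "P ! 0 \<noteq> P ! (length P - 1)"
    using nth_eq_iff_index_eq[OF bare_path_distinct[OF P], of 0 "length P - 1"] by (cases P) auto
  thus ?thesis using bare_path_hd[OF P] bare_path_last[OF P] by simp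
qed

lemma bare_path_vertex_less: "bare_path n E P \<Longrightarrow> j < length P \<Longrightarrow> P ! j < n"
  unfolding bare_path_def by (meson atLeastLessThan_iff nth_mem subsetD)

lemma fixed_by_laplacian_bare_path_step:
  assumes P: "bare_path n E P" and x: "fixed_by_laplacian n E x"
    and j: "0 < j" "Suc j < length P"
  shows "x (P ! Suc j) = x (P ! j) - x (P ! (j - 1))"
proof -
  have nb: "neighbours n E (P ! j) = {P ! (j - 1), P ! Suc j}"
    using P j unfolding bare_path_def by blast
  have "P ! (j - 1) \<noteq> P ! Suc j"
    using bare_path_distinct[OF P] j by (simp add: nth_eq_iff_index_eq)
  moreover have "(of_nat (card (neighbours n E (P ! j))) - 1) * x (P ! j)
      = (\<Sum>i\<in>neighbours n E (P ! j). x i)"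
    using x bare_path_vertex_less[OF P, of j] j unfolding fixed_by_laplacian_def by simp
  ultimately show ?thesis unfolding nb by (simp add: algebra_simps)
qed

lemma arm_values:
  assumes P: "arm n E P" and x: "fixed_by_laplacian n E x"
  shows "j < length P \<Longrightarrow> x (P ! j) = x (P ! 0) * of_int (arm_coeff j)"
proof (induct j rule: arm_coeff.induct)
  case 2
  have P0: "neighbours n E (P ! 0) = {P ! 1}" and bare: "bare_path n E P"
    using P unfolding arm_def by auto
  have "P ! 0 < n" using bare_path_vertex_less[OF bare, of 0] 2 by (cases P) auto
  hence "(of_nat (card (neighbours n E (P ! 0))) - 1) * x (P ! 0) = (\<Sum>i\<in>neighbours n E (P ! 0). x i)"
    using x unfolding fixed_by_laplacian_def by simp
  thus ?case unfolding P0 by simp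
next
  case (3 j)
  have "x (P ! Suc (Suc j)) = x (P ! Suc j) - x (P ! j)"
    using fixed_by_laplacian_bare_path_step[OF _ x, of P "Suc j"] P 3(3) by (simp add: arm_def)
  thus ?case using 3 by (simp add: algebra_simps)
qed simp

lemma bare_path_vanishes:
  assumes P: "bare_path n E P" and x: "fixed_by_laplacian n E x"
    and start: "x (P ! 0) = 0" "x (P ! 1) = 0"
  shows "j < length P \<Longrightarrow> x (P ! j) = 0"
proof (induct j rule: arm_coeff.induct)
  case (3 j)
  thus ?case using fixed_by_laplacian_bare_path_step[OF P x, of "Suc j"] by simp
qed (use start in simp_all)

lemma arm_value_last:
  assumes P: "arm n E P" and x: "fixed_by_laplacian n E x"
  shows "x (last P) = x (P ! 0) * of_int (arm_coeff (length P - 1))"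
proof -
  have "2 \<le> length P" using bare_path_length[OF arm_bare_path[OF P]] .
  thus ?thesis using arm_values[OF P x, of "length P - 1"] bare_path_last[OF arm_bare_path[OF P]] by simp
qed

lemma arm_vanishes_if_last_vanishes:
  fixes x :: "nat \<Rightarrow> 'a::{idom, ring_char_0}"
  assumes P: "arm n E P" and x: "fixed_by_laplacian n E x"
    and last: "x (last P) = 0" and len: "(length P - 1) mod 3 \<noteq> 1"
  shows "v \<in> set P \<Longrightarrow> x v = 0"
  using arm_value_last[OF P x] last len arm_values[OF P x] arm_coeff_eq_0_iff
  by (auto simp: in_set_conv_nth)

lemma arm_vanishes_if_last_two_vanish:
  fixes x :: "nat \<Rightarrow> 'a::{idom, ring_char_0}"
  assumes P: "arm n E P" and x: "fixed_by_laplacian n E x"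
    and last: "x (last P) = 0" and penult: "x (penult P) = 0"
  shows "v \<in> set P \<Longrightarrow> x v = 0"
proof -
  have len: "2 \<le> length P" using bare_path_length[OF arm_bare_path[OF P]] .
  have "x (P ! 0) * of_int (arm_coeff (length P - 2)) = 0"
    using penult arm_values[OF P x, of "length P - 2"] len by simp
  moreover have "x (P ! 0) * of_int (arm_coeff (Suc (length P - 2))) = 0"
    using last arm_value_last[OF P x] len by (simp add: Suc_diff_Suc numeral_2_eq_2)
  ultimately have "x (P ! 0) = 0" using arm_coeff_consecutive[of "length P - 2"] by auto
  thus "v \<in> set P \<Longrightarrow> x v = 0" using arm_values[OF P x] by (auto simp: in_set_conv_nth)
qed

lemma arm_pair_vanishes:
  fixes x :: "nat \<Rightarrow> 'a::{idom, ring_char_0}"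
  assumes P: "arm n E P" and Q: "arm n E Q" and x: "fixed_by_laplacian n E x"
    and meet: "last P = last Q" and last: "x (last P) = 0"
    and sum: "x (penult P) + x (penult Q) = 0" and len: "(length P - 1) mod 3 \<noteq> 1"
  shows "v \<in> set P \<union> set Q \<Longrightarrow> x v = 0"
proof -
  have on_P: "\<And>v. v \<in> set P \<Longrightarrow> x v = 0"
    by (rule arm_vanishes_if_last_vanishes[OF P x last len])
  have "penult P \<in> set P" using bare_path_length[OF arm_bare_path[OF P]] by (intro nth_mem) simp
  hence "x (penult Q) = 0" using sum on_P by simp
  hence "\<And>v. v \<in> set Q \<Longrightarrow> x v = 0"
    using arm_vanishes_if_last_two_vanish[OF Q x] last meet by simp
  thus "v \<in> set P \<union> set Q \<Longrightarrow> x v = 0" using on_P by blast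
qed

lemma fixed_by_laplacian_junction:
  assumes x: "fixed_by_laplacian n E x" and i: "i < n"
    and nb: "neighbours n E i = {a, b, c}" and card: "card (neighbours n E i) = 3"
  shows "2 * x i = x a + x b + x c"
proof -
  have "a \<noteq> b" "a \<noteq> c" "b \<noteq> c" using card unfolding nb by (auto simp: card_insert_if split: if_splits)
  moreover have "(of_nat (card (neighbours n E i)) - 1) * x i = (\<Sum>j\<in>neighbours n E i. x j)"
    using x i unfolding fixed_by_laplacian_def by blast
  ultimately show ?thesis using card unfolding nb by simp
qed

section \<open>Bare paths and arms in a simple graph\<close>

lemma simple_graph_symp: "simple_graph n E \<Longrightarrow> symp E"
  unfolding simple_graph_def by (auto intro: sympI)

lemma simple_graph_irrefl: "simple_graph n E \<Longrightarrow> \<not> E a a"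
  unfolding simple_graph_def by blast

lemma simple_graph_edge_less: "simple_graph n E \<Longrightarrow> E a b \<Longrightarrow> a < n \<and> b < n"
  unfolding simple_graph_def by blast

lemma simple_graph_neighbours_sym:
  "simple_graph n E \<Longrightarrow> b \<in> neighbours n E a \<longleftrightarrow> E a b"
  unfolding neighbours_def using simple_graph_edge_less by blast

lemma path_vertices_less:
  assumes sg: "simple_graph n E" and P: "is_path E P" and len: "2 \<le> length P"
  shows "set P \<subseteq> {0..<n}"
proof
  fix v assume "v \<in> set P"
  then obtain j where j: "j < length P" "v = P ! j" by (auto simp: in_set_conv_nth)
  have walk: "is_walk E P" using P by (simp add: is_path_def)
  show "v \<in> {0..<n}"
  proof (cases "Suc j < length P")
    case True
    thus ?thesis using walk_edge[OF walk True] simple_graph_edge_less[OF sg] j by auto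
  next
    case False
    hence "Suc (j - 1) < length P" "Suc (j - 1) = j" using j len by auto
    thus ?thesis using walk_edge[OF walk, of "j - 1"] simple_graph_edge_less[OF sg] j by auto
  qed
qed

lemma path_neighbours_interior:
  assumes sg: "simple_graph n E" and P: "is_path E P" and j: "0 < j" "Suc j < length P"
    and deg: "degree n E (P ! j) < 3"
  shows "neighbours n E (P ! j) = {P ! (j - 1), P ! Suc j}"
proof -
  have walk: "is_walk E P" and dist: "distinct P" using P unfolding is_path_def by auto
  have "E (P ! (j - 1)) (P ! j)" using walk_edge[OF walk, of "j - 1"] j by simp
  hence "P ! (j - 1) \<in> neighbours n E (P ! j)"
    using simple_graph_neighbours_sym[OF sg] sympD[OF simple_graph_symp[OF sg]] by blast
  moreover have "P ! Suc j \<in> neighbours n E (P ! j)"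
    using walk_edge[OF walk j(2)] simple_graph_neighbours_sym[OF sg] by blast
  moreover have "P ! (j - 1) \<noteq> P ! Suc j" using dist j by (simp add: nth_eq_iff_index_eq)
  ultimately show ?thesis
    using deg card_seteq[OF finite_neighbours, of "{P ! (j - 1), P ! Suc j}"]
    unfolding degree_eq_card_neighbours by auto
qed

lemma bare_path_intro:
  assumes sg: "simple_graph n E" and P: "is_path E P" and ends: "hd P \<noteq> last P"
    and deg: "\<And>j. 0 < j \<Longrightarrow> Suc j < length P \<Longrightarrow> degree n E (P ! j) < 3"
  shows "bare_path n E P"
  unfolding bare_path_def
  using P path_length_ge_2[OF P ends] path_vertices_less[OF sg P] path_neighbours_interior[OF sg P] deg
  by auto

lemma arm_intro:
  assumes sg: "simple_graph n E" and P: "bare_path n E P" and pendant: "degree n E (hd P) = 1"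
  shows "arm n E P"
proof -
  have len: "2 \<le> length P" and walk: "is_walk E P"
    using P unfolding bare_path_def is_path_def by auto
  have "P ! 1 \<in> neighbours n E (P ! 0)"
    using walk_edge[OF walk, of 0] len simple_graph_neighbours_sym[OF sg] by simp
  moreover have "card (neighbours n E (P ! 0)) = 1"
    using pendant bare_path_hd[OF P] by (simp add: degree_eq_card_neighbours)
  ultimately show ?thesis using P unfolding arm_def by (auto simp: card_1_singleton_iff)
qed

lemma bare_path_rev:
  assumes sg: "simple_graph n E" and P: "bare_path n E P"
  shows "bare_path n E (rev P)"
proof -
  have nb: "\<And>j. 0 < j \<Longrightarrow> Suc j < length P \<Longrightarrow> neighbours n E (P ! j) = {P ! (j - 1), P ! Suc j}"
    using P unfolding bare_path_def by blast
  have "neighbours n E (rev P ! j) = {rev P ! (j - 1), rev P ! Suc j}"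
    if j: "0 < j" "Suc j < length P" for j
  proof -
    define k where "k = length P - Suc j"
    have k: "0 < k" "Suc k < length P" using j unfolding k_def by auto
    have "rev P ! j = P ! k" "rev P ! (j - 1) = P ! Suc k" "rev P ! Suc j = P ! (k - 1)"
      using j unfolding k_def by (auto simp: rev_nth Suc_diff_Suc)
    thus ?thesis using nb[OF k] by auto
  qed
  thus ?thesis
    using P path_rev[OF simple_graph_symp[OF sg]] unfolding bare_path_def by simp
qed

lemma arm_neighbours_closed:
  assumes P: "arm n E P" and w: "w \<in> set P" "w \<noteq> last P" and z: "z \<in> neighbours n E w"
  shows "z \<in> set P"
proof -
  obtain j where j: "j < length P" "w = P ! j" using w(1) by (auto simp: in_set_conv_nth)
  have "j \<noteq> length P - 1" using w j bare_path_last[OF arm_bare_path[OF P]] by auto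
  hence "Suc j < length P" using j by simp
  moreover have "z \<in> {P ! (j - 1), P ! Suc j} \<or> z = P ! 1"
    using P z j \<open>Suc j < length P\<close> unfolding arm_def bare_path_def by (cases "j = 0") auto
  ultimately show ?thesis using j by auto
qed

lemma arm_neighbour_of_last:
  assumes P: "arm n E P" and w: "w \<in> set P" "w \<noteq> last P" and z: "last P \<in> neighbours n E w"
  shows "w = penult P"
proof -
  have len: "2 \<le> length P" and dist: "distinct P"
    using P unfolding arm_def bare_path_def is_path_def by auto
  have last: "last P = P ! (length P - 1)" using bare_path_last[OF arm_bare_path[OF P]] .
  obtain j where j: "j < length P" "w = P ! j" using w(1) by (auto simp: in_set_conv_nth)
  have "j \<noteq> length P - 1" using w j last by auto
  hence "Suc j < length P" using j by simp
  have "P ! (length P - 1) \<in> {P ! (j - 1), P ! Suc j}"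
  proof (cases "j = 0")
    case True
    thus ?thesis using P z j last unfolding arm_def by simp
  next
    case False
    thus ?thesis using P z j last \<open>Suc j < length P\<close> unfolding arm_def bare_path_def by auto
  qed
  moreover have "P ! (length P - 1) \<noteq> P ! (j - 1)"
    using dist \<open>Suc j < length P\<close> by (simp add: nth_eq_iff_index_eq)
  ultimately have "P ! (length P - 1) = P ! Suc j" by blast
  hence "length P - 1 = Suc j" using dist \<open>Suc j < length P\<close> by (simp add: nth_eq_iff_index_eq)
  hence "j = length P - 2" by arith
  thus ?thesis using j by simp
qed

text \<open>If \<open>hd C\<close> had a second neighbour on \<open>C\<close>, it could only be \<open>last C\<close>, closing a cycle.\<close>
lemma bare_path_neighbour_of_hd:
  assumes sg: "simple_graph n E" and acyclic: "\<nexists>xs. is_cycle E xs"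
    and C: "bare_path n E C" and w: "w \<in> set C" and edge: "E (hd C) w"
  shows "w = C ! 1"
proof -
  have len: "2 \<le> length C" and dist: "distinct C" and path: "is_path E C"
    using C unfolding bare_path_def is_path_def by auto
  have hd: "hd C = C ! 0" using bare_path_hd[OF C] .
  obtain j where j: "j < length C" "w = C ! j" using w by (auto simp: in_set_conv_nth)
  have "j \<noteq> 0"
  proof
    assume "j = 0"
    thus False using j edge hd simple_graph_irrefl[OF sg] by simp
  qed
  show ?thesis
  proof (cases "Suc j < length C")
    case True
    have "C ! 0 \<in> neighbours n E (C ! j)"
      using edge hd j sympD[OF simple_graph_symp[OF sg]] simple_graph_neighbours_sym[OF sg] by auto
    hence "C ! 0 \<in> {C ! (j - 1), C ! Suc j}"
      using C True \<open>j \<noteq> 0\<close> unfolding bare_path_def by auto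
    moreover have "C ! 0 \<noteq> C ! Suc j" using nth_eq_iff_index_eq[OF dist, of 0 "Suc j"] True by (cases C) auto
    ultimately have "C ! 0 = C ! (j - 1)" by blast
    hence "j - 1 = 0" using dist True nth_eq_iff_index_eq[OF dist, of 0 "j - 1"] by (cases C) auto
    hence "j = 1" using \<open>j \<noteq> 0\<close> by simp
    thus ?thesis using j by simp
  next
    case False
    hence "j = length C - 1" using j by simp
    hence last: "w = last C" using j bare_path_last[OF C] by simp
    have "length C = 2"
    proof (rule ccontr)
      assume "length C \<noteq> 2"
      hence "is_cycle E C"
        using path len edge last sympD[OF simple_graph_symp[OF sg]] unfolding is_cycle_def by auto
      thus False using acyclic by blast
    qed
    hence "j = 1" using j \<open>j \<noteq> 0\<close> by arith
    thus ?thesis using j by simp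
  qed
qed

lemma bare_path_penult_edge: "bare_path n E P \<Longrightarrow> E (penult P) (last P)"
  using walk_edge[of E P "length P - 2"] bare_path_length[of n E P] bare_path_last[of n E P]
  by (auto simp: bare_path_def is_path_def Suc_diff_Suc numeral_2_eq_2)

lemma bare_path_penult_ne_last: "bare_path n E P \<Longrightarrow> penult P \<noteq> last P"
  using bare_path_distinct[of n E P] bare_path_length[of n E P] bare_path_last[of n E P]
  by (auto simp: nth_eq_iff_index_eq)

lemma junction_neighbours:
  assumes sg: "simple_graph n E" and acyclic: "\<nexists>xs. is_cycle E xs"
    and A: "arm n E A" and B: "arm n E B" and C: "bare_path n E C"
    and D: "arm n E D" and F: "arm n E F"
    and ends: "last A = hd C" "last B = hd C" "last D = last C" "last F = last C"
    and meet: "set A \<inter> set B = {hd C}" "set A \<inter> set C = {hd C}" "set B \<inter> set C = {hd C}"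
      "set D \<inter> set C = {last C}" "set F \<inter> set C = {last C}"
    and cover: "{0..<n} \<subseteq> set A \<union> set B \<union> set C \<union> set D \<union> set F"
  shows "neighbours n E (hd C) = {penult A, penult B, C ! 1} \<and> card (neighbours n E (hd C)) = 3"
proof -
  let ?m = "hd C"
  note sym = sympD[OF simple_graph_symp[OF sg]]
  note nb_iff = simple_graph_neighbours_sym[OF sg]
  have lenC: "2 \<le> length C" by (rule bare_path_length[OF C])
  have m_C: "?m \<in> set C" using lenC by (cases C) auto
  have C1_C: "C ! 1 \<in> set C" using lenC by simp
  have last_C: "last C \<in> set C" using lenC by (cases C) auto
  have "?m \<noteq> last C" by (rule bare_path_hd_ne_last[OF C])
  have penult_in: "penult P \<in> set P" "penult P \<noteq> last P" "?m \<in> neighbours n E (penult P)"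
    if "arm n E P" "last P = ?m" for P
    using bare_path_length[OF arm_bare_path[OF that(1)]] bare_path_penult_ne_last[OF arm_bare_path[OF that(1)]]
      bare_path_penult_edge[OF arm_bare_path[OF that(1)]] that(2) nb_iff by auto
  have "E ?m (C ! 1)"
    using walk_edge[of E C 0] C lenC bare_path_hd[OF C] unfolding bare_path_def is_path_def by simp
  hence C1: "C ! 1 \<noteq> ?m" "C ! 1 \<in> neighbours n E ?m"
    using simple_graph_irrefl[OF sg] nb_iff by auto
  have pA: "penult A \<in> set A" "penult A \<noteq> ?m" using penult_in[OF A ends(1)] ends(1) by auto
  have pB: "penult B \<in> set B" "penult B \<noteq> ?m" using penult_in[OF B ends(2)] ends(2) by auto
  have apart: "x \<noteq> y" if "x \<in> X" "y \<in> Y" "X \<inter> Y = {?m}" "x \<noteq> ?m" for x y X Y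
  proof
    assume "x = y"
    hence "x \<in> X \<inter> Y" using that(1,2) by simp
    thus False using that(3,4) by simp
  qed
  have "penult A \<noteq> penult B" by (rule apart[OF pA(1) pB(1) meet(1) pA(2)])
  moreover have "penult A \<noteq> C ! 1" by (rule apart[OF pA(1) C1_C meet(2) pA(2)])
  moreover have "penult B \<noteq> C ! 1" by (rule apart[OF pB(1) C1_C meet(3) pB(2)])
  ultimately have card: "card {penult A, penult B, C ! 1} = 3" by simp
  have "{penult A, penult B, C ! 1} \<subseteq> neighbours n E ?m"
    using penult_in(3)[OF A ends(1)] penult_in(3)[OF B ends(2)] C1(2) nb_iff sym by blast
  moreover have "w \<in> {penult A, penult B, C ! 1}" if w: "w \<in> neighbours n E ?m" for w
  proof -
    have "w < n" "E ?m w" "w \<noteq> ?m"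
      using w simple_graph_irrefl[OF sg] unfolding neighbours_def by auto
    have m_w: "?m \<in> neighbours n E w" using \<open>E ?m w\<close> nb_iff sym by blast
    have on_arm: "w = penult P" if "arm n E P" "last P = ?m" "w \<in> set P" for P
      using arm_neighbour_of_last[OF that(1) that(3)] that(2) \<open>w \<noteq> ?m\<close> m_w by simp
    have off_arm: "w \<notin> set P" if "arm n E P" "last P = last C" "set P \<inter> set C = {last C}"
      "w \<notin> set C" for P
    proof
      assume "w \<in> set P"
      moreover have "w \<noteq> last P" using that(2,4) last_C by auto
      ultimately have "?m \<in> set P" using arm_neighbours_closed[OF that(1)] m_w by blast
      thus False using that(3) m_C \<open>?m \<noteq> last C\<close> by blast
    qed
    show ?thesis
    proof (cases "w \<in> set C")
      case True
      thus ?thesis using bare_path_neighbour_of_hd[OF sg acyclic C True \<open>E ?m w\<close>] by simp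
    next
      case False
      thus ?thesis
        using cover \<open>w < n\<close> on_arm[OF A ends(1)] on_arm[OF B ends(2)]
          off_arm[OF D ends(3) meet(4)] off_arm[OF F ends(4) meet(5)] by auto
    qed
  qed
  ultimately have "neighbours n E ?m = {penult A, penult B, C ! 1}" by blast
  thus ?thesis using card by simp
qed

section \<open>Kernel vectors of \<open>L - I\<close>\<close>

lemma laplacian_carrier: "laplacian n E \<in> carrier_mat n n"
  unfolding laplacian_def by simp

lemma laplacian_symmetric:
  "simple_graph n E \<Longrightarrow> i < n \<Longrightarrow> j < n \<Longrightarrow> laplacian n E $$ (i, j) = laplacian n E $$ (j, i)"
  unfolding laplacian_def simple_graph_def by auto

lemma laplacian_kernel_fixed:
  assumes sg: "simple_graph n E"
    and v: "v \<in> mat_kernel (char_matrix (map_mat complex_of_real (laplacian n E)) 1)"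
  shows "fixed_by_laplacian n E (\<lambda>i. v $ i)"
  unfolding fixed_by_laplacian_def
proof (intro allI impI)
  fix i assume i: "i < n"
  let ?M = "char_matrix (map_mat complex_of_real (laplacian n E)) 1"
  have M: "?M \<in> carrier_mat n n" using laplacian_carrier by simp
  have vn: "v \<in> carrier_vec n" and z: "?M *\<^sub>v v = 0\<^sub>v n"
    using mat_kernelD[OF M v] by auto
  have Ment: "?M $$ (i, j) = (if i = j then of_nat (degree n E i) - 1 else if E i j then -1 else 0)"
    if "j < n" for j
    using that i unfolding char_matrix_def laplacian_def by auto
  have "0 = (?M *\<^sub>v v) $ i" using z i by simp
  also have "\<dots> = (\<Sum>j = 0..<n. ?M $$ (i, j) * v $ j)"
    using i vn M by (simp add: scalar_prod_def)
  also have "\<dots> = (\<Sum>j = 0..<n. (if j = i then (of_nat (degree n E i) - 1) * v $ i else 0)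
                    + (if E i j then - v $ j else 0))"
    by (rule sum.cong[OF refl]) (use simple_graph_irrefl[OF sg] in \<open>auto simp: Ment\<close>)
  also have "\<dots> = (of_nat (degree n E i) - 1) * v $ i + (\<Sum>j \<in> neighbours n E i. - v $ j)"
    unfolding sum.distrib using i
    by (simp add: sum.If_cases neighbours_def Int_def conj_commute)
  finally show "(of_nat (card (neighbours n E i)) - 1) * v $ i = (\<Sum>j\<in>neighbours n E i. v $ j)"
    unfolding degree_eq_card_neighbours by (simp add: sum_negf algebra_simps eq_neg_iff_add_eq_0)
qed

section \<open>Trees with two major vertices\<close>

text \<open>The tree of the theorem cut into the arms \<open>P1, P2\<close> ending in \<open>m1 = hd C\<close>, the arms
  \<open>P3, P4\<close> ending in \<open>m2 = last C\<close>, and the path \<open>C\<close> between the two major vertices.\<close>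
definition H_decomp ::
  "nat \<Rightarrow> (nat \<Rightarrow> nat \<Rightarrow> bool) \<Rightarrow> nat list \<Rightarrow> nat list \<Rightarrow> nat list \<Rightarrow> nat list \<Rightarrow> nat list \<Rightarrow> bool"
where
  "H_decomp n E P1 P2 C P3 P4 \<longleftrightarrow>
     arm n E P1 \<and> arm n E P2 \<and> arm n E P3 \<and> arm n E P4 \<and> bare_path n E C \<and>
     last P1 = hd C \<and> last P2 = hd C \<and> last P3 = last C \<and> last P4 = last C \<and>
     neighbours n E (hd C) = {penult P1, penult P2, C ! 1} \<and> card (neighbours n E (hd C)) = 3 \<and>
     neighbours n E (last C) = {penult P3, penult P4, penult C} \<and> card (neighbours n E (last C)) = 3 \<and>
     {0..<n} \<subseteq> set P1 \<union> set P2 \<union> set C \<union> set P3 \<union> set P4"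

lemma H_decomp_swap: "H_decomp n E P1 P2 C P3 P4 \<Longrightarrow> H_decomp n E P2 P1 C P3 P4"
  unfolding H_decomp_def by (auto simp: insert_commute)

lemma H_decomp_eigenvector_vanishes:
  fixes x :: "nat \<Rightarrow> 'a::{idom, ring_char_0}"
  assumes H: "H_decomp n E P1 P2 C P3 P4" and x: "fixed_by_laplacian n E x"
    and u1: "x (P1 ! 0) = 0"
    and len2: "(length P2 - 1) mod 3 \<noteq> 1"
    and len34: "(length P3 - 1) mod 3 \<noteq> 1 \<or> (length P4 - 1) mod 3 \<noteq> 1"
  shows "i < n \<Longrightarrow> x i = 0"
proof -
  have A1: "arm n E P1" and A2: "arm n E P2" and A3: "arm n E P3" and A4: "arm n E P4"
    and C: "bare_path n E C"
    and ends: "last P1 = hd C" "last P2 = hd C" "last P3 = last C" "last P4 = last C"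
    and nb1: "neighbours n E (hd C) = {penult P1, penult P2, C ! 1}"
    and card1: "card (neighbours n E (hd C)) = 3"
    and nb2: "neighbours n E (last C) = {penult P3, penult P4, penult C}"
    and card2: "card (neighbours n E (last C)) = 3"
    and cover: "{0..<n} \<subseteq> set P1 \<union> set P2 \<union> set C \<union> set P3 \<union> set P4"
    using H unfolding H_decomp_def by blast+
  have lenC: "2 \<le> length C" by (rule bare_path_length[OF C])
  have on_P1: "x v = 0" if "v \<in> set P1" for v
    using arm_values[OF A1 x] u1 that by (auto simp: in_set_conv_nth)
  have m1: "x (hd C) = 0"
    using on_P1[OF last_in_set[OF bare_path_nonempty[OF arm_bare_path[OF A1]]]] ends(1) by simp
  have on_P2: "x v = 0" if "v \<in> set P2" for v
    using arm_vanishes_if_last_vanishes[OF A2 x _ len2 that] ends(2) m1 by simp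
  have "2 * x (hd C) = x (penult P1) + x (penult P2) + x (C ! 1)"
    by (rule fixed_by_laplacian_junction[OF x _ nb1 card1])
      (use bare_path_vertex_less[OF C, of 0] bare_path_nonempty[OF C] bare_path_hd[OF C] in simp)
  moreover have "penult P1 \<in> set P1" "penult P2 \<in> set P2"
    using bare_path_length[OF arm_bare_path[OF A1]] bare_path_length[OF arm_bare_path[OF A2]] by simp_all
  ultimately have "x (C ! 1) = 0" using m1 on_P1 on_P2 by simp
  hence on_C: "x (C ! j) = 0" if "j < length C" for j
    using bare_path_vanishes[OF C x _ _ that] m1 bare_path_hd[OF C] by simp
  have on_C_set: "x v = 0" if "v \<in> set C" for v
    using on_C that by (auto simp: in_set_conv_nth)
  have m2: "x (last C) = 0" and "x (penult C) = 0"
    using on_C[of "length C - 1"] on_C[of "length C - 2"] lenC bare_path_last[OF C] by simp_all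
  moreover have "2 * x (last C) = x (penult P3) + x (penult P4) + x (penult C)"
    by (rule fixed_by_laplacian_junction[OF x _ nb2 card2])
      (use bare_path_vertex_less[OF C, of "length C - 1"] lenC bare_path_last[OF C] in simp)
  ultimately have "x (penult P3) + x (penult P4) = 0" by simp
  hence on_P34: "x v = 0" if "v \<in> set P3 \<union> set P4" for v
    using len34 arm_pair_vanishes[OF A3 A4 x, of v] arm_pair_vanishes[OF A4 A3 x, of v]
      ends(3,4) m2 that by (auto simp: add.commute)
  show "i < n \<Longrightarrow> x i = 0"
    using cover on_P1 on_P2 on_C_set on_P34 by auto
qed

lemma H_decomp_laplacian_order_le_1:
  assumes sg: "simple_graph n E" and H: "H_decomp n E P1 P2 C P3 P4"
    and len2: "(length P2 - 1) mod 3 \<noteq> 1"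
    and len34: "(length P3 - 1) mod 3 \<noteq> 1 \<or> (length P4 - 1) mod 3 \<noteq> 1"
  shows "Polynomial.order 1 (char_poly (laplacian n E)) \<le> 1"
proof (rule real_symmetric_order_char_poly_le_1[OF laplacian_carrier laplacian_symmetric[OF sg]])
  have "arm n E P1" using H unfolding H_decomp_def by blast
  thus "P1 ! 0 < n"
    using bare_path_vertex_less[OF arm_bare_path, of n E P1 0] bare_path_nonempty[OF arm_bare_path] by blast
  fix v assume v: "v \<in> mat_kernel (char_matrix (map_mat complex_of_real (laplacian n E)) (of_real 1))"
    and u1: "v $ (P1 ! 0) = 0"
  have v1: "v \<in> mat_kernel (char_matrix (map_mat complex_of_real (laplacian n E)) 1)" using v by simp
  have "fixed_by_laplacian n E (\<lambda>i. v $ i)" by (rule laplacian_kernel_fixed[OF sg v1])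
  hence "v $ i = 0" if "i < n" for i
    using H_decomp_eigenvector_vanishes[OF H _ _ len2 len34 that] u1 by blast
  moreover have "char_matrix (map_mat complex_of_real (laplacian n E)) 1 \<in> carrier_mat n n"
    using laplacian_carrier by simp
  hence "v \<in> carrier_vec n" using mat_kernelD(1) v1 by blast
  ultimately show "v = 0\<^sub>v n" by (intro eq_vecI) auto
qed

lemma H_decomp_exists:
  assumes tree: "is_tree n E"
    and pend: "{v. pendant n E v} = {u1, u2, u3, u4}"
    and maj: "{v. major n E v} = {m1, m2}" and mdist: "m1 \<noteq> m2"
    and union: "{0..<n} = path_verts E u1 m1 \<union> path_verts E u2 m1 \<union> path_verts E m1 m2
                  \<union> path_verts E u3 m2 \<union> path_verts E u4 m2"
    and g12: "path_verts E u1 m1 \<inter> path_verts E u2 m1 = {m1}"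
    and g1c: "path_verts E u1 m1 \<inter> path_verts E m1 m2 = {m1}"
    and g2c: "path_verts E u2 m1 \<inter> path_verts E m1 m2 = {m1}"
    and g34: "path_verts E u3 m2 \<inter> path_verts E u4 m2 = {m2}"
    and g3c: "path_verts E u3 m2 \<inter> path_verts E m1 m2 = {m2}"
    and g4c: "path_verts E u4 m2 \<inter> path_verts E m1 m2 = {m2}"
  obtains P1 P2 C P3 P4 where "H_decomp n E P1 P2 C P3 P4"
    "hd P1 = u1" "hd P2 = u2" "hd P3 = u3" "hd P4 = u4" "hd C = m1" "last C = m2"
proof -
  have sg: "simple_graph n E" and acyclic: "\<nexists>xs. is_cycle E xs"
    using tree unfolding is_tree_def by auto
  note sym = simple_graph_symp[OF sg]
  have path_of: "\<exists>P. is_path E P \<and> hd P = r \<and> last P = s \<and> path_verts E r s = set P"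
    if "z \<in> path_verts E r s" for z r s
    using that path_verts_eq_set[OF sym acyclic] unfolding path_verts_def by blast
  obtain P1 where P1: "is_path E P1" "hd P1 = u1" "last P1 = m1" "path_verts E u1 m1 = set P1"
    using path_of[of m1] g12 by blast
  obtain P2 where P2: "is_path E P2" "hd P2 = u2" "last P2 = m1" "path_verts E u2 m1 = set P2"
    using path_of[of m1] g12 by blast
  obtain C where C: "is_path E C" "hd C = m1" "last C = m2" "path_verts E m1 m2 = set C"
    using path_of[of m1] g1c by blast
  obtain P3 where P3: "is_path E P3" "hd P3 = u3" "last P3 = m2" "path_verts E u3 m2 = set P3"
    using path_of[of m2] g34 by blast
  obtain P4 where P4: "is_path E P4" "hd P4 = u4" "last P4 = m2" "path_verts E u4 m2 = set P4"
    using path_of[of m2] g34 by blast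
  have pendant_deg: "degree n E u = 1" if "u \<in> {u1, u2, u3, u4}" for u
  proof -
    have "u \<in> {v. pendant n E v}" using pend that by simp
    thus ?thesis unfolding pendant_def by simp
  qed
  have major_deg: "3 \<le> degree n E m" if "m \<in> {m1, m2}" for m
  proof -
    have "m \<in> {v. major n E v}" using maj that by simp
    thus ?thesis unfolding major_def by simp
  qed
  have minor_deg: "degree n E v < 3" if "v < n" "v \<notin> {m1, m2}" for v
  proof -
    have "v \<notin> {v. major n E v}" using maj that(2) by simp
    thus ?thesis using that(1) unfolding major_def by simp
  qed
  have bare: "bare_path n E P"
    if P: "is_path E P" "hd P \<noteq> last P" "set P \<inter> {m1, m2} \<subseteq> {hd P, last P}" for P
  proof (rule bare_path_intro[OF sg P(1,2)])
    fix j assume j: "0 < j" "Suc j < length P"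
    have "P ! j \<in> set P" using j by simp
    hence "P ! j \<notin> {m1, m2}" using P(3) path_interior_ne_ends[OF P(1) j] by blast
    moreover have "P ! j < n"
      using \<open>P ! j \<in> set P\<close> path_vertices_less[OF sg P(1) path_length_ge_2[OF P(1,2)]] by auto
    ultimately show "degree n E (P ! j) < 3" by (rule minor_deg[rotated])
  qed
  have arm: "arm n E P"
    if P: "is_path E P" "hd P \<in> {u1, u2, u3, u4}" "last P \<in> {m1, m2}" "set P \<inter> {m1, m2} \<subseteq> {last P}"
    for P
  proof (rule arm_intro[OF sg bare[OF P(1)]])
    show "degree n E (hd P) = 1" using pendant_deg P(2) .
    thus "hd P \<noteq> last P" using major_deg[OF P(3)] by auto
    show "set P \<inter> {m1, m2} \<subseteq> {hd P, last P}" using P(4) by blast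
  qed
  have m1_C: "m1 \<in> set C" and m2_C: "m2 \<in> set C"
    using C(1-3) hd_in_set[of C] last_in_set[of C] by (auto simp: is_path_def is_walk_def)
  have A1: "arm n E P1" using arm[OF P1(1)] P1 g1c C(4) m2_C mdist by auto
  have A2: "arm n E P2" using arm[OF P2(1)] P2 g2c C(4) m2_C mdist by auto
  have A3: "arm n E P3" using arm[OF P3(1)] P3 g3c C(4) m1_C mdist by auto
  have A4: "arm n E P4" using arm[OF P4(1)] P4 g4c C(4) m1_C mdist by auto
  have BC: "bare_path n E C" using bare[OF C(1)] C(2,3) mdist by auto
  have cover: "{0..<n} \<subseteq> set P1 \<union> set P2 \<union> set C \<union> set P3 \<union> set P4"
    using union P1(4) P2(4) C(4) P3(4) P4(4) by auto
  have J1: "neighbours n E (hd C) = {penult P1, penult P2, C ! 1} \<and> card (neighbours n E (hd C)) = 3"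
    by (rule junction_neighbours[OF sg acyclic A1 A2 BC A3 A4])
      (use P1 P2 C P3 P4 g12 g1c g2c g3c g4c cover in auto)
  have J2: "neighbours n E (last C) = {penult P3, penult P4, penult C}
      \<and> card (neighbours n E (last C)) = 3"
  proof -
    have cover': "{0..<n} \<subseteq> set P3 \<union> set P4 \<union> set (rev C) \<union> set P1 \<union> set P2"
      using cover by auto
    have J: "neighbours n E (hd (rev C)) = {penult P3, penult P4, rev C ! 1}
        \<and> card (neighbours n E (hd (rev C))) = 3"
      by (rule junction_neighbours[OF sg acyclic A3 A4 bare_path_rev[OF sg BC] A1 A2 _ _ _ _ _ _ _ _ _ cover'])
        (use P1 P2 C P3 P4 g34 g3c g4c g1c g2c in \<open>auto simp: hd_rev last_rev\<close>)
    have "rev C ! 1 = penult C" using bare_path_length[OF BC] by (simp add: rev_nth numeral_2_eq_2)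
    thus ?thesis using J unfolding hd_rev by argo
  qed
  have "H_decomp n E P1 P2 C P3 P4"
    unfolding H_decomp_def using A1 A2 A3 A4 BC J1 J2 P1(3) P2(3) P3(3) P4(3) C(2,3) cover by argo
  thus ?thesis using that P1 P2 P3 P4 C by blast
qed

theorem mainTheorem13:
  fixes n :: nat and E :: "nat \<Rightarrow> nat \<Rightarrow> bool" and u1 u2 u3 u4 m1 m2 :: nat
  assumes tree: "is_tree n E"
    and pend: "{v. pendant n E v} = {u1, u2, u3, u4}"
    and udist: "distinct [u1, u2, u3, u4]"
    and maj: "{v. major n E v} = {m1, m2}"
    and mdist: "m1 \<noteq> m2"
    and union: "{0..<n} = path_verts E u1 m1 \<union> path_verts E u2 m1 \<union> path_verts E m1 m2
                  \<union> path_verts E u3 m2 \<union> path_verts E u4 m2"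
    and g12: "path_verts E u1 m1 \<inter> path_verts E u2 m1 = {m1}"
    and g1c: "path_verts E u1 m1 \<inter> path_verts E m1 m2 = {m1}"
    and g2c: "path_verts E u2 m1 \<inter> path_verts E m1 m2 = {m1}"
    and g34: "path_verts E u3 m2 \<inter> path_verts E u4 m2 = {m2}"
    and g3c: "path_verts E u3 m2 \<inter> path_verts E m1 m2 = {m2}"
    and g4c: "path_verts E u4 m2 \<inter> path_verts E m1 m2 = {m2}"
    and d13: "path_verts E u1 m1 \<inter> path_verts E u3 m2 = {}"
    and d14: "path_verts E u1 m1 \<inter> path_verts E u4 m2 = {}"
    and d23: "path_verts E u2 m1 \<inter> path_verts E u3 m2 = {}"
    and d24: "path_verts E u2 m1 \<inter> path_verts E u4 m2 = {}"
    and mult: "lap_mult n E 1 \<ge> 2"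
  shows "(dist_graph E u1 m1 mod 3 = 1 \<and> dist_graph E u2 m1 mod 3 = 1)
       \<or> (dist_graph E u3 m2 mod 3 = 1 \<and> dist_graph E u4 m2 mod 3 = 1)"
proof -
  have sg: "simple_graph n E" and acyclic: "\<nexists>xs. is_cycle E xs"
    using tree unfolding is_tree_def by auto
  obtain P1 P2 C P3 P4 where H: "H_decomp n E P1 P2 C P3 P4" and
    ends: "hd P1 = u1" "hd P2 = u2" "hd P3 = u3" "hd P4 = u4" "hd C = m1" "last C = m2"
    using H_decomp_exists[OF tree pend maj mdist union g12 g1c g2c g34 g3c g4c] by blast
  have dist: "dist_graph E (hd P) (last P) = length P - 1" if "arm n E P" for P
    using dist_graph_path[OF simple_graph_symp[OF sg] acyclic] that
    unfolding arm_def bare_path_def by blast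
  have arms: "arm n E P1" "arm n E P2" "arm n E P3" "arm n E P4"
    and lasts: "last P1 = m1" "last P2 = m1" "last P3 = m2" "last P4 = m2"
    using H ends(5,6) unfolding H_decomp_def by auto
  have "dist_graph E u1 m1 = length P1 - 1" "dist_graph E u2 m1 = length P2 - 1"
    "dist_graph E u3 m2 = length P3 - 1" "dist_graph E u4 m2 = length P4 - 1"
    using dist[OF arms(1)] dist[OF arms(2)] dist[OF arms(3)] dist[OF arms(4)] ends lasts by simp_all
  moreover have "\<not> Polynomial.order 1 (char_poly (laplacian n E)) \<le> 1"
    using mult unfolding lap_mult_def by simp
  ultimately show ?thesis
    using H_decomp_laplacian_order_le_1[OF sg H] H_decomp_laplacian_order_le_1[OF sg H_decomp_swap[OF H]]
    by auto
qed

end
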